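(* Let $A$ be a synaptic algebra and $p,q\in P$. Define $r_p:=p\wedge(p^{\perp}\vee q)\wedge(p^{\perp}\vee q^{\perp})$, $r_{p^{\perp}}:=p^{\perp}\wedge(p\vee q)\wedge(p\vee q^{\perp})$, $r_q:=q\wedge(p\vee q^{\perp})\wedge(p^{\perp}\vee q^{\perp})$, $r_{q^{\perp}}:=q^{\perp}\wedge(p\vee q)\wedge(p^{\perp}\vee q)$, and $[p,q]:=(p\vee q)\wedge(p\vee q^{\perp})\wedge(p^{\perp}\vee q)\wedge(p^{\perp}\vee q^{\perp})$. The following conditions are mutually equivalent: (i) at least one of $r_p=0$, $r_{p^{\perp}}=0$, $r_q=0$, $r_{q^{\perp}}=0$ holds; (ii) $r_p=r_{p^{\perp}}=r_q=r_{q^{\perp}}=0$; (iii) at least one of $pCq$, $pCq^{\perp}$, $p^{\perp}Cq$, $p^{\perp}Cq^{\perp}$ holds; (iv) $pCq$, $pCq^{\perp}$, $p^{\perp}Cq$ and $p^{\perp}Cq^{\perp}$ all hold; (v) $[p,q]=0$.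
   Context: Synaptic algebra (Foulis): $R$ is a real linear associative algebra with unit $1$, and $A\subseteq R$ is a real linear subspace with $1\in A$. For $a,b\in A$ write $aCb$ iff $ab=ba$; $C(a):=\{b\in A: aCb\}$; $CC(a):=\{b\in A: bCd \text{ for all } d\in C(a)\}$. $A$ is a synaptic algebra with enveloping algebra $R$ iff: (SA1) $A$ is a partially ordered archimedean real linear space with positive cone $A^+$, $1$ is an order unit, $\|\cdot\|$ the order-unit norm; (SA2) $a\in A\Rightarrow a^2\in A^+$; (SA3) $a,b\in A^+\Rightarrow aba\in A^+$; (SA4) if $a\in A$, $b\in A^+$, $aba=0$ then $ab=ba=0$; (SA5) if $a\in A^+$ there is $b\in A^+\cap CC(a)$ with $b^2=a$; (SA6) for $a\in A$ there is $p=p^2\in A$ with $ab=0\Leftrightarrow pb=0$ for all $b\in A$; (SA7) if $1\le a$ there is $b\in A$ with $ab=ba=1$; (SA8) if $a,b\in A$, $a_1\le a_2\le\cdots$ are pairwise commuting elements of $C(b)$ with $\|a-a_n\|\to0$, then $a\in C(b)$. $A$ is nondegenerate. $P:=\{p\in A:p=p^2\}$ with the order inherited from $A$ is an orthomodular lattice with orthocomplement $p^{\perp}:=1-p$, meet $\wedge$, join $\vee$. *)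

theory Defs
  imports Complex_Main
begin

text \<open>A synaptic algebra is given by its enveloping real unital associative algebra
  (the type 'r), the subspace A and the positive cone Pos (which determines the order).\<close>

definition sa_le :: "'r::real_algebra_1 set \<Rightarrow> 'r \<Rightarrow> 'r \<Rightarrow> bool" where
  "sa_le Pos a b \<longleftrightarrow> b - a \<in> Pos"

definition commutes :: "'r::real_algebra_1 \<Rightarrow> 'r \<Rightarrow> bool" where
  "commutes a b \<longleftrightarrow> a * b = b * a"

definition Cset :: "'r::real_algebra_1 set \<Rightarrow> 'r \<Rightarrow> 'r set" where
  "Cset A a = {b \<in> A. commutes a b}"

definition CCset :: "'r::real_algebra_1 set \<Rightarrow> 'r \<Rightarrow> 'r set" where
  "CCset A a = {b \<in> A. \<forall>d \<in> Cset A a. commutes b d}"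

definition ou_norm :: "'r::real_algebra_1 set \<Rightarrow> 'r \<Rightarrow> real" where
  "ou_norm Pos a = Inf {l::real. 0 \<le> l \<and> sa_le Pos (- (l *\<^sub>R 1)) a \<and> sa_le Pos a (l *\<^sub>R 1)}"

definition synaptic_algebra :: "'r::real_algebra_1 set \<Rightarrow> 'r set \<Rightarrow> bool" where
  "synaptic_algebra A Pos \<longleftrightarrow>
    \<comment> \<open>A is a real linear subspace of R containing 1\<close>
    0 \<in> A \<and> 1 \<in> A \<and> (\<forall>a\<in>A. \<forall>b\<in>A. a + b \<in> A) \<and> (\<forall>a\<in>A. \<forall>l::real. l *\<^sub>R a \<in> A)
    \<comment> \<open>SA1: partially ordered (positive cone), archimedean, 1 order unit\<close>
    \<and> Pos \<subseteq> A \<and> 0 \<in> Pos \<and> (\<forall>a\<in>Pos. \<forall>b\<in>Pos. a + b \<in> Pos)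
    \<and> (\<forall>a\<in>Pos. \<forall>l::real. 0 \<le> l \<longrightarrow> l *\<^sub>R a \<in> Pos)
    \<and> (\<forall>a. a \<in> Pos \<and> - a \<in> Pos \<longrightarrow> a = 0)
    \<and> (\<forall>a\<in>A. \<forall>b\<in>A. (\<forall>n::nat. sa_le Pos (of_nat n *\<^sub>R a) b) \<longrightarrow> sa_le Pos a 0)
    \<and> (\<forall>a\<in>A. \<exists>n::nat. sa_le Pos a (of_nat n *\<^sub>R 1))
    \<comment> \<open>SA2\<close>
    \<and> (\<forall>a\<in>A. a * a \<in> Pos)
    \<comment> \<open>SA3\<close>
    \<and> (\<forall>a\<in>Pos. \<forall>b\<in>Pos. a * b * a \<in> Pos)
    \<comment> \<open>SA4\<close>
    \<and> (\<forall>a\<in>A. \<forall>b\<in>Pos. a * b * a = 0 \<longrightarrow> a * b = 0 \<and> b * a = 0)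
    \<comment> \<open>SA5\<close>
    \<and> (\<forall>a\<in>Pos. \<exists>b\<in>Pos. b \<in> CCset A a \<and> b * b = a)
    \<comment> \<open>SA6\<close>
    \<and> (\<forall>a\<in>A. \<exists>p\<in>A. p * p = p \<and> (\<forall>b\<in>A. a * b = 0 \<longleftrightarrow> p * b = 0))
    \<comment> \<open>SA7\<close>
    \<and> (\<forall>a\<in>A. sa_le Pos 1 a \<longrightarrow> (\<exists>b\<in>A. a * b = 1 \<and> b * a = 1))
    \<comment> \<open>SA8\<close>
    \<and> (\<forall>a\<in>A. \<forall>b\<in>A. \<forall>s::nat \<Rightarrow> 'r.
         (\<forall>n. s n \<in> Cset A b) \<and> (\<forall>n. sa_le Pos (s n) (s (Suc n)))
         \<and> (\<forall>m n. commutes (s m) (s n))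
         \<and> (\<lambda>n. ou_norm Pos (a - s n)) \<longlonglongrightarrow> 0
         \<longrightarrow> a \<in> Cset A b)
    \<comment> \<open>nondegenerate\<close>
    \<and> (0::'r) \<noteq> 1"

definition projs :: "'r::real_algebra_1 set \<Rightarrow> 'r set" where
  "projs A = {p \<in> A. p * p = p}"

definition pmeet :: "'r::real_algebra_1 set \<Rightarrow> 'r set \<Rightarrow> 'r \<Rightarrow> 'r \<Rightarrow> 'r" where
  "pmeet A Pos p q = (THE r. r \<in> projs A \<and> sa_le Pos r p \<and> sa_le Pos r q
      \<and> (\<forall>s\<in>projs A. sa_le Pos s p \<and> sa_le Pos s q \<longrightarrow> sa_le Pos s r))"

definition pjoin :: "'r::real_algebra_1 set \<Rightarrow> 'r set \<Rightarrow> 'r \<Rightarrow> 'r \<Rightarrow> 'r" where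
  "pjoin A Pos p q = (THE r. r \<in> projs A \<and> sa_le Pos p r \<and> sa_le Pos q r
      \<and> (\<forall>s\<in>projs A. sa_le Pos p s \<and> sa_le Pos q s \<longrightarrow> sa_le Pos r s))"

definition pcomp :: "'r::real_algebra_1 \<Rightarrow> 'r" where
  "pcomp p = 1 - p"

end

theory Submission imports Defs begin

text \<open>Write \<open>u = p \<sqinter> q\<close>, \<open>v = p \<sqinter> q\<^sup>\<bottom>\<close>, \<open>w = p\<^sup>\<bottom> \<sqinter> q\<close>, \<open>z = p\<^sup>\<bottom> \<sqinter> q\<^sup>\<bottom>\<close>. These
  projections are pairwise orthogonal, and by De Morgan the four joins occurring in the theorem are
  \<open>1 - v, 1 - u, 1 - w, 1 - z\<close>. The meet of complements of orthogonal projections is the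
  complement of their sum, so \<open>r\<^sub>p = p - (u + v)\<close> and
  \<open>[p,q] = (p - (u + v)) + (p\<^sup>\<bottom> - (w + z))\<close>, a sum of two positive elements. Finally
  \<open>p = u + v\<close> holds iff \<open>p\<close> and \<open>q\<close> commute: then \<open>u = pq\<close> and \<open>v = p(1 - q)\<close>, and
  conversely \<open>pq = u = qp\<close>.\<close>

lemma commutes_sym: "commutes a b \<longleftrightarrow> commutes b a"
  by (auto simp: commutes_def)

lemma commutes_one_minus_left: "commutes (1 - a) b \<longleftrightarrow> commutes a b"
  by (auto simp: commutes_def algebra_simps)

lemma commutes_one_minus_right: "commutes a (1 - b) \<longleftrightarrow> commutes a b"
  by (auto simp: commutes_def algebra_simps)

locale synaptic =
  fixes A Pos :: "'r::real_algebra_1 set"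
  assumes synaptic: "synaptic_algebra A Pos"
begin

abbreviation pmeet_syntax (infixl "\<sqinter>\<^sub>P" 70) where "p \<sqinter>\<^sub>P q \<equiv> pmeet A Pos p q"
abbreviation pjoin_syntax (infixl "\<squnion>\<^sub>P" 68) where "p \<squnion>\<^sub>P q \<equiv> pjoin A Pos p q"
abbreviation sa_le_syntax (infix "\<le>\<^sub>P" 50) where "a \<le>\<^sub>P b \<equiv> sa_le Pos a b"

lemma A_add: "a \<in> A \<Longrightarrow> b \<in> A \<Longrightarrow> a + b \<in> A"
  using synaptic unfolding synaptic_algebra_def by (elim conjE) (simp only: Ball_def)

lemma A_scaleR: "a \<in> A \<Longrightarrow> c *\<^sub>R a \<in> A"
  using synaptic unfolding synaptic_algebra_def by (elim conjE) (simp only: Ball_def)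

lemma A_diff: "a \<in> A \<Longrightarrow> b \<in> A \<Longrightarrow> a - b \<in> A"
  using A_add A_scaleR[of b "-1"] by (metis scaleR_minus1_left diff_conv_add_uminus)

lemma one_in_A: "1 \<in> A"
  using synaptic unfolding synaptic_algebra_def by (elim conjE) (simp only: Ball_def)

lemma Pos_subset_A: "a \<in> Pos \<Longrightarrow> a \<in> A"
  using synaptic unfolding synaptic_algebra_def by (elim conjE) (simp only: subset_iff)

lemma Pos_antisym: "a \<in> Pos \<Longrightarrow> - a \<in> Pos \<Longrightarrow> a = 0"
  using synaptic unfolding synaptic_algebra_def by (elim conjE) (simp only: Ball_def)

lemma square_in_Pos: "a \<in> A \<Longrightarrow> a * a \<in> Pos"
  using synaptic unfolding synaptic_algebra_def by (elim conjE) (simp only: Ball_def)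

lemma sandwich_in_Pos: "a \<in> Pos \<Longrightarrow> b \<in> Pos \<Longrightarrow> a * b * a \<in> Pos"
  using synaptic unfolding synaptic_algebra_def by (elim conjE) (simp only: Ball_def)

lemma sandwich_eq_zeroD: "a \<in> A \<Longrightarrow> b \<in> Pos \<Longrightarrow> a * b * a = 0 \<Longrightarrow> a * b = 0 \<and> b * a = 0"
  using synaptic unfolding synaptic_algebra_def by (elim conjE) (simp only: Ball_def)

lemma carrier_proj_exists: "a \<in> A \<Longrightarrow> \<exists>e\<in>A. e * e = e \<and> (\<forall>b\<in>A. a * b = 0 \<longleftrightarrow> e * b = 0)"
  using synaptic unfolding synaptic_algebra_def by (elim conjE) (simp only: Ball_def)

lemma sa_le_antisym: "a \<le>\<^sub>P b \<Longrightarrow> b \<le>\<^sub>P a \<Longrightarrow> a = b"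
  using Pos_antisym[of "b - a"] by (simp add: sa_le_def)

lemma Pos_add_eq_zero_iff:
  assumes "a \<in> Pos" and "b \<in> Pos"
  shows "a + b = 0 \<longleftrightarrow> a = 0 \<and> b = 0"
proof
  assume sum: "a + b = 0"
  then have "- a = b"
    by (simp add: add_eq_0_iff)
  then have "a = 0"
    using Pos_antisym assms by simp
  with sum show "a = 0 \<and> b = 0"
    by simp
qed simp

lemma sa_le_one_minus_iff: "1 - a \<le>\<^sub>P 1 - b \<longleftrightarrow> b \<le>\<^sub>P a"
  by (simp add: sa_le_def)

subsection \<open>Projections\<close>

lemma projsD: "p \<in> projs A \<Longrightarrow> p \<in> A \<and> p * p = p"
  by (simp add: projs_def)

lemma proj_in_Pos: "p \<in> projs A \<Longrightarrow> p \<in> Pos"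
  by (metis projsD square_in_Pos)

lemma proj_one_minus: "p \<in> projs A \<Longrightarrow> 1 - p \<in> projs A"
  using one_in_A A_diff by (auto simp: projs_def algebra_simps)

lemma proj_compression_eq_zeroD:
  assumes "q \<in> projs A" and "a \<in> Pos" and "(1 - q) * a * (1 - q) = 0"
  shows "a * q = a \<and> q * a = a"
  using sandwich_eq_zeroD[of "1 - q" a] assms projsD[OF proj_one_minus] by (simp add: algebra_simps)

lemma proj_mult_right_eq_iff_left:
  assumes p: "p \<in> projs A" and q: "q \<in> projs A"
  shows "p * q = p \<longleftrightarrow> q * p = p"
proof -
  have "(1 - q) * p * (1 - q) = 0" if "p * q = p"
    using that by (simp add: algebra_simps)
  moreover have "(1 - q) * p * (1 - q) = 0" if "q * p = p"
    using that by (simp add: algebra_simps flip: mult.assoc)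
  ultimately show ?thesis
    using proj_compression_eq_zeroD[OF q proj_in_Pos[OF p]] by blast
qed

lemma proj_le_iff_mult_right:
  assumes p: "p \<in> projs A" and q: "q \<in> projs A"
  shows "p \<le>\<^sub>P q \<longleftrightarrow> p * q = p"
proof
  assume "p \<le>\<^sub>P q"
  then have "(1 - q) * (q - p) * (1 - q) \<in> Pos"
    using sandwich_in_Pos proj_in_Pos[OF proj_one_minus[OF q]] by (simp add: sa_le_def)
  moreover have "(1 - q) * (q - p) * (1 - q) = - ((1 - q) * p * (1 - q))"
    using projsD[OF q] by (simp add: algebra_simps flip: mult.assoc)
  moreover have "(1 - q) * p * (1 - q) \<in> Pos"
    using sandwich_in_Pos proj_in_Pos p proj_one_minus q by blast
  ultimately have "(1 - q) * p * (1 - q) = 0"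
    using Pos_antisym by simp
  then show "p * q = p"
    using proj_compression_eq_zeroD[OF q proj_in_Pos[OF p]] by blast
next
  assume pq: "p * q = p"
  then have "q * p = p"
    using proj_mult_right_eq_iff_left[OF p q] by blast
  then have "(q - p) * (q - p) = q - p"
    using pq projsD[OF p] projsD[OF q] by (simp add: algebra_simps)
  moreover have "(q - p) * (q - p) \<in> Pos"
    using square_in_Pos A_diff projsD p q by blast
  ultimately show "p \<le>\<^sub>P q"
    by (simp add: sa_le_def)
qed

lemma proj_le_iff_mult_left:
  assumes "p \<in> projs A" and "q \<in> projs A"
  shows "p \<le>\<^sub>P q \<longleftrightarrow> q * p = p"
  using proj_le_iff_mult_right[OF assms] proj_mult_right_eq_iff_left[OF assms] by blast

lemma proj_le_trans:
  assumes "a \<in> projs A" "b \<in> projs A" "c \<in> projs A" and "a \<le>\<^sub>P b" "b \<le>\<^sub>P c"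
  shows "a \<le>\<^sub>P c"
proof -
  have "a * b = a" "b * c = b"
    using assms proj_le_iff_mult_right by blast+
  then have "a * c = a"
    by (metis mult.assoc)
  then show ?thesis
    using assms proj_le_iff_mult_right by blast
qed

lemma proj_mult_eq_zero_commute:
  assumes p: "p \<in> projs A" and q: "q \<in> projs A" and "p * q = 0"
  shows "q * p = 0"
proof -
  have "p * (1 - q) = p"
    using assms by (simp add: algebra_simps)
  then have "(1 - q) * p = p"
    using proj_mult_right_eq_iff_left[OF p proj_one_minus[OF q]] by blast
  then show ?thesis
    by (simp add: algebra_simps)
qed

lemma proj_orthogonal_add:
  assumes a: "a \<in> projs A" and b: "b \<in> projs A" and ab: "a * b = 0"
  shows "a + b \<in> projs A"
proof -
  have "b * a = 0"
    using proj_mult_eq_zero_commute[OF a b ab] .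
  then show ?thesis
    using a b ab A_add by (auto simp: projs_def algebra_simps)
qed

lemma proj_commuting_mult:
  assumes a: "a \<in> projs A" and b: "b \<in> projs A" and ab: "a * b = b * a"
  shows "a * b \<in> projs A"
proof -
  have "(a + b) * (a + b) - a - b = 2 *\<^sub>R (a * b)"
    using ab projsD[OF a] projsD[OF b] by (simp add: algebra_simps scaleR_2)
  moreover have "(a + b) * (a + b) - a - b \<in> A"
    using A_diff A_add square_in_Pos Pos_subset_A projsD a b by meson
  ultimately have "a * b \<in> A"
    using A_scaleR[of _ "1/2"] by fastforce
  moreover have "(a * b) * (a * b) = a * b"
    using ab projsD[OF a] projsD[OF b] by (metis mult.assoc)
  ultimately show ?thesis
    by (simp add: projs_def)
qed

lemma proj_mult_eq_zero_of_le_orthogonal: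
  assumes "a \<in> projs A" "b \<in> projs A" "e \<in> projs A" "f \<in> projs A"
    and "a \<le>\<^sub>P e" and "b \<le>\<^sub>P f" and "e * f = 0"
  shows "a * b = 0"
proof -
  have "a = a * e" and "b = f * b"
    using assms proj_le_iff_mult_right proj_le_iff_mult_left by metis+
  then have "a * b = a * (e * f) * b"
    by (metis mult.assoc)
  then show ?thesis
    using assms(7) by simp
qed

subsection \<open>Meets and joins of projections\<close>

definition is_pjoin :: "'r \<Rightarrow> 'r \<Rightarrow> 'r \<Rightarrow> bool" where
  "is_pjoin p q r \<longleftrightarrow> r \<in> projs A \<and> p \<le>\<^sub>P r \<and> q \<le>\<^sub>P r
      \<and> (\<forall>s\<in>projs A. p \<le>\<^sub>P s \<and> q \<le>\<^sub>P s \<longrightarrow> r \<le>\<^sub>P s)"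

definition is_pmeet :: "'r \<Rightarrow> 'r \<Rightarrow> 'r \<Rightarrow> bool" where
  "is_pmeet p q r \<longleftrightarrow> r \<in> projs A \<and> r \<le>\<^sub>P p \<and> r \<le>\<^sub>P q
      \<and> (\<forall>s\<in>projs A. s \<le>\<^sub>P p \<and> s \<le>\<^sub>P q \<longrightarrow> s \<le>\<^sub>P r)"

lemma pjoin_eqI: "is_pjoin p q r \<Longrightarrow> p \<squnion>\<^sub>P q = r"
  unfolding pjoin_def is_pjoin_def[symmetric]
  by (rule the_equality) (auto simp: is_pjoin_def intro: sa_le_antisym)

lemma pmeet_eqI: "is_pmeet p q r \<Longrightarrow> p \<sqinter>\<^sub>P q = r"
  unfolding pmeet_def is_pmeet_def[symmetric]
  by (rule the_equality) (auto simp: is_pmeet_def intro: sa_le_antisym)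

lemma pjoin_commute: "p \<squnion>\<^sub>P q = q \<squnion>\<^sub>P p"
  unfolding pjoin_def by (rule arg_cong[where f = The]) auto

text \<open>The join of \<open>p\<close> and \<open>q\<close> is the carrier projection of \<open>p + q\<close> provided by axiom SA6.\<close>

lemma is_pjoin_exists:
  assumes p: "p \<in> projs A" and q: "q \<in> projs A"
  shows "\<exists>r. is_pjoin p q r"
proof -
  have "p + q \<in> A"
    using A_add projsD p q by blast
  then obtain e where "e \<in> A" "e * e = e" and ann: "\<forall>b\<in>A. (p + q) * b = 0 \<longleftrightarrow> e * b = 0"
    using carrier_proj_exists by blast
  then have e: "e \<in> projs A"
    by (simp add: projs_def)
  have ce: "1 - e \<in> projs A"
    using proj_one_minus[OF e] .
  have "e * (1 - e) = 0"
    using projsD[OF e] by (simp add: algebra_simps)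
  then have "(p + q) * (1 - e) = 0"
    using ann projsD[OF ce] by blast
  then have "(1 - e) * p * (1 - e) + (1 - e) * q * (1 - e) = 0"
    by (metis distrib_left distrib_right mult.assoc mult_zero_right)
  moreover have "(1 - e) * p * (1 - e) \<in> Pos" "(1 - e) * q * (1 - e) \<in> Pos"
    using sandwich_in_Pos proj_in_Pos ce p q by blast+
  ultimately have "(1 - e) * p * (1 - e) = 0" "(1 - e) * q * (1 - e) = 0"
    using Pos_add_eq_zero_iff by blast+
  then have "p \<le>\<^sub>P e" "q \<le>\<^sub>P e"
    using proj_compression_eq_zeroD[OF e] proj_in_Pos proj_le_iff_mult_right e p q by auto
  moreover have "e \<le>\<^sub>P s" if s: "s \<in> projs A" "p \<le>\<^sub>P s" "q \<le>\<^sub>P s" for s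
  proof -
    have "p * s = p" "q * s = q"
      using s proj_le_iff_mult_right p q by blast+
    then have "(p + q) * (1 - s) = 0"
      by (simp add: algebra_simps)
    then have "e * (1 - s) = 0"
      using ann projsD[OF proj_one_minus[OF s(1)]] by blast
    then show ?thesis
      using proj_le_iff_mult_right[OF e s(1)] by (simp add: algebra_simps)
  qed
  ultimately show ?thesis
    using e unfolding is_pjoin_def by blast
qed

lemma is_pjoin_pjoin: "p \<in> projs A \<Longrightarrow> q \<in> projs A \<Longrightarrow> is_pjoin p q (p \<squnion>\<^sub>P q)"
  using is_pjoin_exists pjoin_eqI by blast

lemma pjoin_in_projs: "p \<in> projs A \<Longrightarrow> q \<in> projs A \<Longrightarrow> p \<squnion>\<^sub>P q \<in> projs A"
  using is_pjoin_pjoin unfolding is_pjoin_def by blast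

lemma is_pmeet_one_minus_pjoin:
  assumes p: "p \<in> projs A" and q: "q \<in> projs A"
  shows "is_pmeet p q (1 - ((1 - p) \<squnion>\<^sub>P (1 - q)))"
proof -
  let ?j = "(1 - p) \<squnion>\<^sub>P (1 - q)"
  have j: "is_pjoin (1 - p) (1 - q) ?j"
    using is_pjoin_pjoin proj_one_minus p q by blast
  have "1 - ?j \<in> projs A" "1 - ?j \<le>\<^sub>P p" "1 - ?j \<le>\<^sub>P q"
    using j proj_one_minus sa_le_one_minus_iff[of _ "1 - ?j"] unfolding is_pjoin_def by auto
  moreover have "s \<le>\<^sub>P 1 - ?j" if s: "s \<in> projs A" "s \<le>\<^sub>P p" "s \<le>\<^sub>P q" for s
  proof -
    have "?j \<le>\<^sub>P 1 - s"
      using s j proj_one_minus[OF s(1)] sa_le_one_minus_iff unfolding is_pjoin_def by blast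
    then show ?thesis
      using sa_le_one_minus_iff[of "1 - s" ?j] by simp
  qed
  ultimately show ?thesis
    unfolding is_pmeet_def by blast
qed

lemma pmeet_eq_one_minus_pjoin:
  "p \<in> projs A \<Longrightarrow> q \<in> projs A \<Longrightarrow> p \<sqinter>\<^sub>P q = 1 - ((1 - p) \<squnion>\<^sub>P (1 - q))"
  by (rule pmeet_eqI[OF is_pmeet_one_minus_pjoin])

lemma pjoin_eq_one_minus_pmeet:
  assumes "p \<in> projs A" and "q \<in> projs A"
  shows "p \<squnion>\<^sub>P q = 1 - ((1 - p) \<sqinter>\<^sub>P (1 - q))"
  using pmeet_eq_one_minus_pjoin[OF proj_one_minus[OF assms(1)] proj_one_minus[OF assms(2)]]
  by simp

lemma is_pmeet_pmeet: "p \<in> projs A \<Longrightarrow> q \<in> projs A \<Longrightarrow> is_pmeet p q (p \<sqinter>\<^sub>P q)"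
  using is_pmeet_one_minus_pjoin pmeet_eq_one_minus_pjoin by simp

lemma pmeet_in_projs: "p \<in> projs A \<Longrightarrow> q \<in> projs A \<Longrightarrow> p \<sqinter>\<^sub>P q \<in> projs A"
  using is_pmeet_pmeet unfolding is_pmeet_def by blast

lemma pmeet_le:
  assumes "p \<in> projs A" "q \<in> projs A"
  shows "p \<sqinter>\<^sub>P q \<le>\<^sub>P p" "p \<sqinter>\<^sub>P q \<le>\<^sub>P q"
  using is_pmeet_pmeet[OF assms] unfolding is_pmeet_def by blast+

lemma pmeet_greatest:
  assumes "p \<in> projs A" "q \<in> projs A" "s \<in> projs A" and "s \<le>\<^sub>P p" "s \<le>\<^sub>P q"
  shows "s \<le>\<^sub>P p \<sqinter>\<^sub>P q"
  using is_pmeet_pmeet[OF assms(1,2)] assms(3-5) unfolding is_pmeet_def by blast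

lemma pmeet_assoc:
  assumes p: "p \<in> projs A" and q: "q \<in> projs A" and r: "r \<in> projs A"
  shows "p \<sqinter>\<^sub>P (q \<sqinter>\<^sub>P r) = (p \<sqinter>\<^sub>P q) \<sqinter>\<^sub>P r"
proof (rule pmeet_eqI)
  let ?m = "(p \<sqinter>\<^sub>P q) \<sqinter>\<^sub>P r"
  have pq: "p \<sqinter>\<^sub>P q \<in> projs A" and qr: "q \<sqinter>\<^sub>P r \<in> projs A" and m: "?m \<in> projs A"
    using pmeet_in_projs p q r by blast+
  have m_le: "?m \<le>\<^sub>P p" "?m \<le>\<^sub>P q" "?m \<le>\<^sub>P r"
    using pmeet_le[OF pq r] pmeet_le[OF p q] proj_le_trans[OF m pq] p q by blast+
  have "s \<le>\<^sub>P ?m" if s: "s \<in> projs A" "s \<le>\<^sub>P p" "s \<le>\<^sub>P q \<sqinter>\<^sub>P r" for s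
  proof -
    have "s \<le>\<^sub>P q" "s \<le>\<^sub>P r"
      using pmeet_le[OF q r] proj_le_trans[OF s(1) qr] s(3) q r by blast+
    then show ?thesis
      using pmeet_greatest[OF pq r s(1)] pmeet_greatest[OF p q s(1)] s(2) by blast
  qed
  then show "is_pmeet p (q \<sqinter>\<^sub>P r) ?m"
    using m m_le pmeet_greatest[OF q r m] unfolding is_pmeet_def by blast
qed

lemma pjoin_orthogonal:
  assumes a: "a \<in> projs A" and b: "b \<in> projs A" and ab: "a * b = 0"
  shows "a \<squnion>\<^sub>P b = a + b"
proof (rule pjoin_eqI)
  have ab_proj: "a + b \<in> projs A"
    using proj_orthogonal_add[OF assms] .
  have ba: "b * a = 0"
    using proj_mult_eq_zero_commute[OF assms] .
  have "a \<le>\<^sub>P a + b" "b \<le>\<^sub>P a + b"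
    using proj_le_iff_mult_right[OF a ab_proj] proj_le_iff_mult_right[OF b ab_proj] projsD a b ab ba
    by (simp_all add: algebra_simps)
  moreover have "a + b \<le>\<^sub>P s" if "s \<in> projs A" "a \<le>\<^sub>P s" "b \<le>\<^sub>P s" for s
    using that proj_le_iff_mult_right a b ab_proj by (simp add: distrib_right)
  ultimately show "is_pjoin a b (a + b)"
    using ab_proj unfolding is_pjoin_def by blast
qed

lemma pmeet_one_minus_orthogonal:
  assumes "a \<in> projs A" "b \<in> projs A" "a * b = 0"
  shows "(1 - a) \<sqinter>\<^sub>P (1 - b) = 1 - (a + b)"
  using pmeet_eq_one_minus_pjoin[OF proj_one_minus proj_one_minus] pjoin_orthogonal assms
  by simp

lemma pmeet_commuting:
  assumes a: "a \<in> projs A" and b: "b \<in> projs A" and ab: "a * b = b * a"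
  shows "a \<sqinter>\<^sub>P b = a * b"
proof (rule pmeet_eqI)
  have ab_proj: "a * b \<in> projs A"
    using proj_commuting_mult[OF assms] .
  have "a * b * a = a * b" "a * b * b = a * b"
    using ab projsD a b by (metis mult.assoc)+
  then have "a * b \<le>\<^sub>P a" "a * b \<le>\<^sub>P b"
    using proj_le_iff_mult_right ab_proj a b by blast+
  moreover have "s \<le>\<^sub>P a * b" if "s \<in> projs A" "s \<le>\<^sub>P a" "s \<le>\<^sub>P b" for s
    using that proj_le_iff_mult_right a b ab_proj by (simp add: mult.assoc[symmetric])
  ultimately show "is_pmeet a b (a * b)"
    using ab_proj unfolding is_pmeet_def by blast
qed

lemma pmeet_one_minus_mult_pmeet:
  assumes p: "p \<in> projs A" and q: "q \<in> projs A" and r: "r \<in> projs A"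
  shows "p \<sqinter>\<^sub>P (1 - q) * (r \<sqinter>\<^sub>P q) = 0"
proof (rule proj_mult_eq_zero_of_le_orthogonal)
  show "(1 - q) * q = 0"
    using projsD[OF q] by (simp add: algebra_simps)
  show "p \<sqinter>\<^sub>P (1 - q) \<le>\<^sub>P 1 - q" "r \<sqinter>\<^sub>P q \<le>\<^sub>P q"
    using pmeet_le(2) p r q proj_one_minus by blast+
qed (simp_all add: pmeet_in_projs proj_one_minus p q r)

lemma pmeet_pjoin_one_minus_eq:
  assumes p: "p \<in> projs A" and q: "q \<in> projs A"
  shows "((1 - p) \<squnion>\<^sub>P q) \<sqinter>\<^sub>P ((1 - p) \<squnion>\<^sub>P (1 - q)) = 1 - (p \<sqinter>\<^sub>P (1 - q) + p \<sqinter>\<^sub>P q)"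
proof -
  have "(1 - p) \<squnion>\<^sub>P q = 1 - p \<sqinter>\<^sub>P (1 - q)" "(1 - p) \<squnion>\<^sub>P (1 - q) = 1 - p \<sqinter>\<^sub>P q"
    using pjoin_eq_one_minus_pmeet proj_one_minus p q by simp_all
  moreover have "p \<sqinter>\<^sub>P (1 - q) * (p \<sqinter>\<^sub>P q) = 0"
    by (rule pmeet_one_minus_mult_pmeet[OF p q p])
  ultimately show ?thesis
    using pmeet_one_minus_orthogonal[OF pmeet_in_projs pmeet_in_projs] proj_one_minus p q by simp
qed

lemma pmeets_add_in_projs:
  assumes p: "p \<in> projs A" and q: "q \<in> projs A"
  shows "p \<sqinter>\<^sub>P (1 - q) + p \<sqinter>\<^sub>P q \<in> projs A"
  by (rule proj_orthogonal_add) (simp_all add: pmeet_in_projs proj_one_minus pmeet_one_minus_mult_pmeet p q)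

lemma pmeets_add_le:
  assumes p: "p \<in> projs A" and q: "q \<in> projs A"
  shows "p \<sqinter>\<^sub>P (1 - q) + p \<sqinter>\<^sub>P q \<le>\<^sub>P p"
proof -
  have "p \<sqinter>\<^sub>P (1 - q) * p = p \<sqinter>\<^sub>P (1 - q)"
    using proj_le_iff_mult_right[OF pmeet_in_projs p] pmeet_le(1) proj_one_minus p q by blast
  moreover have "p \<sqinter>\<^sub>P q * p = p \<sqinter>\<^sub>P q"
    using proj_le_iff_mult_right[OF pmeet_in_projs p] pmeet_le(1) p q by blast
  ultimately show ?thesis
    using proj_le_iff_mult_right[OF pmeets_add_in_projs[OF p q] p] by (simp add: distrib_right)
qed

subsection \<open>Generic parts and the commutator\<close>

text \<open>\<open>generic_part p q\<close> is the paper's \<open>r\<^sub>p\<close>; in Halmos' two-projection theory it is the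
  generic part of \<open>p\<close> relative to \<open>q\<close>.\<close>

definition generic_part :: "'r \<Rightarrow> 'r \<Rightarrow> 'r" where
  "generic_part p q = p \<sqinter>\<^sub>P (((1 - p) \<squnion>\<^sub>P q) \<sqinter>\<^sub>P ((1 - p) \<squnion>\<^sub>P (1 - q)))"

definition pcommutator :: "'r \<Rightarrow> 'r \<Rightarrow> 'r" where
  "pcommutator p q = (p \<squnion>\<^sub>P q) \<sqinter>\<^sub>P ((p \<squnion>\<^sub>P (1 - q)) \<sqinter>\<^sub>P (((1 - p) \<squnion>\<^sub>P q) \<sqinter>\<^sub>P ((1 - p) \<squnion>\<^sub>P (1 - q))))"

lemma generic_part_in_projs: "p \<in> projs A \<Longrightarrow> q \<in> projs A \<Longrightarrow> generic_part p q \<in> projs A"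
  unfolding generic_part_def by (intro pmeet_in_projs pjoin_in_projs proj_one_minus)

lemma generic_part_eq:
  assumes p: "p \<in> projs A" and q: "q \<in> projs A"
  shows "generic_part p q = p - (p \<sqinter>\<^sub>P (1 - q) + p \<sqinter>\<^sub>P q)"
proof -
  let ?s = "p \<sqinter>\<^sub>P (1 - q) + p \<sqinter>\<^sub>P q"
  have "p * ?s = ?s"
    using pmeets_add_le[OF p q] proj_le_iff_mult_left[OF pmeets_add_in_projs[OF p q] p] by blast
  then have "(1 - p) * ?s = 0"
    by (simp add: left_diff_distrib)
  then have "(1 - (1 - p)) \<sqinter>\<^sub>P (1 - ?s) = 1 - ((1 - p) + ?s)"
    using pmeet_one_minus_orthogonal[OF proj_one_minus[OF p] pmeets_add_in_projs[OF p q]] by blast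
  then show ?thesis
    unfolding generic_part_def pmeet_pjoin_one_minus_eq[OF p q] by simp
qed

lemma pmeets_add_eq_iff_commutes:
  assumes p: "p \<in> projs A" and q: "q \<in> projs A"
  shows "p \<sqinter>\<^sub>P (1 - q) + p \<sqinter>\<^sub>P q = p \<longleftrightarrow> commutes p q"
proof
  let ?v = "p \<sqinter>\<^sub>P (1 - q)" and ?u = "p \<sqinter>\<^sub>P q"
  assume p_eq: "?v + ?u = p"
  have cq: "1 - q \<in> projs A"
    using proj_one_minus[OF q] .
  have "?v * (1 - q) = ?v" "(1 - q) * ?v = ?v"
    using proj_le_iff_mult_right[OF pmeet_in_projs[OF p cq] cq]
      proj_le_iff_mult_left[OF pmeet_in_projs[OF p cq] cq]
      pmeet_le(2)[OF p cq] by blast+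
  then have "?v * q = 0" "q * ?v = 0"
    by (simp_all add: algebra_simps)
  moreover have "?u * q = ?u" "q * ?u = ?u"
    using proj_le_iff_mult_right[OF pmeet_in_projs[OF p q] q]
      proj_le_iff_mult_left[OF pmeet_in_projs[OF p q] q]
      pmeet_le(2)[OF p q] by blast+
  ultimately have "(?v + ?u) * q = ?u" "q * (?v + ?u) = ?u"
    by (simp_all add: algebra_simps)
  then have "p * q = ?u" "q * p = ?u"
    by (simp_all only: p_eq)
  then show "commutes p q"
    by (simp add: commutes_def)
next
  assume "commutes p q"
  then have "p * q = q * p" "p * (1 - q) = (1 - q) * p"
    by (simp_all add: commutes_def algebra_simps)
  then show "p \<sqinter>\<^sub>P (1 - q) + p \<sqinter>\<^sub>P q = p"
    using pmeet_commuting[OF p q] pmeet_commuting[OF p proj_one_minus[OF q]]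
    by (simp add: algebra_simps)
qed

lemma generic_part_eq_zero_iff:
  assumes "p \<in> projs A" and "q \<in> projs A"
  shows "generic_part p q = 0 \<longleftrightarrow> commutes p q"
  using generic_part_eq[OF assms] pmeets_add_eq_iff_commutes[OF assms] by auto

lemma pcommutator_eq:
  assumes p: "p \<in> projs A" and q: "q \<in> projs A"
  shows "pcommutator p q = generic_part p q + generic_part (1 - p) q"
proof -
  let ?s = "p \<sqinter>\<^sub>P (1 - q) + p \<sqinter>\<^sub>P q"
  let ?t = "(1 - p) \<sqinter>\<^sub>P (1 - q) + (1 - p) \<sqinter>\<^sub>P q"
  have cp: "1 - p \<in> projs A" and cq: "1 - q \<in> projs A"
    using proj_one_minus p q by blast+
  have s: "?s \<in> projs A" "?s \<le>\<^sub>P p"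
    using pmeets_add_in_projs[OF p q] pmeets_add_le[OF p q] .
  have t: "?t \<in> projs A" "?t \<le>\<^sub>P 1 - p"
    using pmeets_add_in_projs[OF cp q] pmeets_add_le[OF cp q] .
  have "(1 - p) * p = 0"
    using projsD[OF p] by (simp add: algebra_simps)
  then have ts: "?t * ?s = 0"
    using proj_mult_eq_zero_of_le_orthogonal[OF t(1) s(1) cp p t(2) s(2)] by blast
  have "pcommutator p q
      = ((p \<squnion>\<^sub>P q) \<sqinter>\<^sub>P (p \<squnion>\<^sub>P (1 - q))) \<sqinter>\<^sub>P (((1 - p) \<squnion>\<^sub>P q) \<sqinter>\<^sub>P ((1 - p) \<squnion>\<^sub>P (1 - q)))"
    unfolding pcommutator_def using pmeet_assoc[OF pjoin_in_projs[OF p q] pjoin_in_projs[OF p cq]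
        pmeet_in_projs[OF pjoin_in_projs[OF cp q] pjoin_in_projs[OF cp cq]]] .
  also have "\<dots> = (1 - ?t) \<sqinter>\<^sub>P (1 - ?s)"
    using pmeet_pjoin_one_minus_eq[OF p q] pmeet_pjoin_one_minus_eq[OF cp q] by simp
  also have "\<dots> = 1 - (?t + ?s)"
    using pmeet_one_minus_orthogonal[OF t(1) s(1) ts] .
  also have "\<dots> = (p - ?s) + ((1 - p) - ?t)"
    by (simp add: algebra_simps)
  finally show ?thesis
    using generic_part_eq[OF p q] generic_part_eq[OF cp q] by simp
qed

lemma pcommutator_eq_zero_iff:
  assumes p: "p \<in> projs A" and q: "q \<in> projs A"
  shows "pcommutator p q = 0 \<longleftrightarrow> commutes p q"
proof -
  have cp: "1 - p \<in> projs A"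
    using proj_one_minus[OF p] .
  have "pcommutator p q = 0 \<longleftrightarrow> generic_part p q = 0 \<and> generic_part (1 - p) q = 0"
    unfolding pcommutator_eq[OF p q]
    by (intro Pos_add_eq_zero_iff proj_in_Pos generic_part_in_projs cp p q)
  then show ?thesis
    using generic_part_eq_zero_iff[OF p q] generic_part_eq_zero_iff[OF cp q]
      commutes_one_minus_left[of p q] by blast
qed

end

theorem theorem3p3:
  fixes A Pos :: "'r::real_algebra_1 set" and p q :: 'r
  assumes SA: "synaptic_algebra A Pos"
    and hp: "p \<in> projs A" and hq: "q \<in> projs A"
  defines "rp \<equiv> pmeet A Pos p (pmeet A Pos (pjoin A Pos (pcomp p) q) (pjoin A Pos (pcomp p) (pcomp q)))"
    and "rpc \<equiv> pmeet A Pos (pcomp p) (pmeet A Pos (pjoin A Pos p q) (pjoin A Pos p (pcomp q)))"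
    and "rq \<equiv> pmeet A Pos q (pmeet A Pos (pjoin A Pos p (pcomp q)) (pjoin A Pos (pcomp p) (pcomp q)))"
    and "rqc \<equiv> pmeet A Pos (pcomp q) (pmeet A Pos (pjoin A Pos p q) (pjoin A Pos (pcomp p) q))"
    and "bpq \<equiv> pmeet A Pos (pjoin A Pos p q) (pmeet A Pos (pjoin A Pos p (pcomp q))
                 (pmeet A Pos (pjoin A Pos (pcomp p) q) (pjoin A Pos (pcomp p) (pcomp q))))"
  shows "((rp = 0 \<or> rpc = 0 \<or> rq = 0 \<or> rqc = 0)
            \<longleftrightarrow> (rp = 0 \<and> rpc = 0 \<and> rq = 0 \<and> rqc = 0))
       \<and> ((rp = 0 \<and> rpc = 0 \<and> rq = 0 \<and> rqc = 0)
            \<longleftrightarrow> (commutes p q \<or> commutes p (pcomp q) \<or> commutes (pcomp p) q \<or> commutes (pcomp p) (pcomp q)))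
       \<and> ((commutes p q \<or> commutes p (pcomp q) \<or> commutes (pcomp p) q \<or> commutes (pcomp p) (pcomp q))
            \<longleftrightarrow> (commutes p q \<and> commutes p (pcomp q) \<and> commutes (pcomp p) q \<and> commutes (pcomp p) (pcomp q)))
       \<and> ((commutes p q \<and> commutes p (pcomp q) \<and> commutes (pcomp p) q \<and> commutes (pcomp p) (pcomp q))
            \<longleftrightarrow> bpq = 0)"
proof -
  interpret synaptic A Pos
    by (rule synaptic.intro) (fact SA)
  have cp: "1 - p \<in> projs A" and cq: "1 - q \<in> projs A"
    using proj_one_minus hp hq by blast+
  have "rp = generic_part p q" "rpc = generic_part (1 - p) q"
    "rq = generic_part q p" "rqc = generic_part (1 - q) p" "bpq = pcommutator p q"
    unfolding rp_def rpc_def rq_def rqc_def bpq_def pcomp_def generic_part_def pcommutator_def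
    by (simp_all add: pjoin_commute[of _ q] pjoin_commute[of p] pjoin_commute[of "1 - p"])
  moreover note generic_part_eq_zero_iff[OF hp hq] generic_part_eq_zero_iff[OF cp hq]
    generic_part_eq_zero_iff[OF hq hp] generic_part_eq_zero_iff[OF cq hp]
    pcommutator_eq_zero_iff[OF hp hq]
  ultimately show ?thesis
    unfolding pcomp_def commutes_one_minus_left commutes_one_minus_right commutes_sym[of q p]
    by simp
qed

end
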